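(* Let $x_{k-1},x_k,x_{k+1}$ be consecutive Newton–Anderson iterates with $x_k,x_{k-1}\in B_{\hat r}(x^* )\setminus S$, under Assumption (A), and with $w_{k+1}\ne0$. Let $r^e_{k+1}$ and a minimizer $E_{k+1}$ be as in the context, and suppose $r^e_{k+1}<1$ and $$\|E_{k+1}\|\le \frac{\|P_Nw_{k+1}^{\alpha}\|}{1-r^e_{k+1}}.$$ Then $$\|P_Ne_{k+1}\|\le\Big(\frac{1+r^e_{k+1}}{1-r^e_{k+1}}\Big)\theta_{k+1}\|w_{k+1}\|.$$
   Context: $f:\mathbb{R}^n\to\mathbb{R}^n$ is $C^3$ with $f(x^* )=0$; norms are Euclidean; $N=\operatorname{null}f'(x^* )\neq\{0\}$, $R=\operatorname{range}f'(x^* )$, $\mathbb{R}^n=N\oplus R$, $P_N,P_R$ orthogonal projections; $S=\{x:\det f'(x)=0\}$. Iterates: $e_k=x_k-x^*$, $w_{k+1}=-f'(x_k)^{-1}f(x_k)$; Newton–Anderson: $x_1=x_0+w_1$, and for $k\ge1$, $\gamma_{k+1}=(w_{k+1}-w_k)^Tw_{k+1}/\|w_{k+1}-w_k\|^2$, $x_{k+1}=x_k+w_{k+1}-\gamma_{k+1}(x_k-x_{k-1}+w_{k+1}-w_k)$. $w^\alpha_{k+1}=(1-\gamma_{k+1})w_{k+1}+\gamma_{k+1}w_k$ and the optimization gain is $\theta_{k+1}=\|w^\alpha_{k+1}\|/\|w_{k+1}\|$. $\hat D(x):N\to N$, $v\mapsto P_Nf''(x^* )(x-x^*,v)$. Assumption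 (A): for $x\in B_{\hat r}(x^* )\setminus S$, $\hat D(x)$ is invertible on $N$, and $f'(x)^{-1}=\hat D(x)^{-1}P_N+\mathcal{O}(1)$ for $\|x-x^*\|<\hat r$. $T_kv=\tfrac12\hat D(x_k)^{-1}P_Nf''(x_k)(e_k,v)$. Set $q_{k-1}^k:=e_{k+1}-\tfrac12\big((1-\gamma_{k+1})P_Ne_k+\gamma_{k+1}P_Ne_{k-1}\big)-\big((1-\gamma_{k+1})T_kP_Re_k+\gamma_{k+1}T_{k-1}P_Re_{k-1}\big)$ and the vectors $a_1=\tfrac{1-\gamma_{k+1}}{2}P_Ne_k$, $a_2=\tfrac{\gamma_{k+1}}{2}P_Ne_{k-1}$, $a_3=(1-\gamma_{k+1})T_kP_Re_k$, $a_4=\gamma_{k+1}T_{k-1}P_Re_{k-1}$, $a_5=P_Nq_{k-1}^k$ (so $P_Ne_{k+1}=\sum_i a_i$). $S^e_{k+1}$ is the set of sums $\sum_{i\in I}a_i$ over nonempty proper subsets $I\subsetneq\{1,\dots,5\}$; $R^e_{k+1}=\{\|P_Ne_{k+1}-E\|/\|E\|:E\in S^e_{k+1},E\ne0\}$; $r^e_{k+1}=\min R^e_{k+1}$, and $E_{k+1}\in S^e_{k+1}$ is an element attaining this minimum. *)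

theory Defs
  imports "HOL-Analysis.Analysis"
begin

definition oproj :: "'a::real_inner set \<Rightarrow> 'a \<Rightarrow> 'a" where
  "oproj V v = (THE p. p \<in> V \<and> (\<forall>u\<in>V. inner (v - p) u = 0))"

end

theory Submission
  imports Defs
begin

text \<open>Since \<open>E\<close> attains the relative error \<open>r\<close>, the triangle inequality gives
  \<open>\<parallel>P\<^sub>N e\<^sub>k\<^sub>+\<^sub>1\<parallel> \<le> (1 + r) \<parallel>E\<parallel>\<close>. The hypothesis bounds \<open>\<parallel>E\<parallel>\<close> by
  \<open>\<parallel>P\<^sub>N w\<^sup>\<alpha>\<parallel> / (1 - r)\<close>, and an orthogonal projection does not increase norms, so
  \<open>\<parallel>P\<^sub>N w\<^sup>\<alpha>\<parallel> \<le> \<parallel>w\<^sup>\<alpha>\<parallel> = \<theta> \<parallel>w\<^sub>k\<^sub>+\<^sub>1\<parallel>\<close>.\<close>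

lemma oproj_eq:
  assumes "subspace V" "p \<in> V" "\<forall>u\<in>V. inner (v - p) u = 0"
  shows "oproj V v = p"
  unfolding oproj_def
proof (rule the_equality)
  show "p \<in> V \<and> (\<forall>u\<in>V. inner (v - p) u = 0)"
    using assms(2,3) by blast
next
  fix p' assume p': "p' \<in> V \<and> (\<forall>u\<in>V. inner (v - p') u = 0)"
  have "p - p' \<in> V"
    using assms(1,2) p' by (simp add: subspace_diff)
  then have "inner (p - p') (p - p') = inner (v - p') (p - p') - inner (v - p) (p - p')"
    by (simp add: inner_diff_left)
  also have "\<dots> = 0"
    using assms(3) p' \<open>p - p' \<in> V\<close> by simp
  finally show "p' = p" by simp
qed

lemma norm_oproj_le:
  fixes V :: "'a::euclidean_space set"
  assumes "subspace V"
  shows "norm (oproj V v) \<le> norm v"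
proof -
  obtain y z where y: "y \<in> span V" and z: "\<And>u. u \<in> span V \<Longrightarrow> orthogonal z u"
      and v: "v = y + z"
    by (rule orthogonal_subspace_decomp_exists[of V v]) blast
  have span_V: "span V = V"
    using assms by (rule span_eq_iff[THEN iffD2])
  have "oproj V v = y"
    using assms y z span_V v by (intro oproj_eq) (auto simp: orthogonal_def)
  moreover have "(norm v)\<^sup>2 = (norm y)\<^sup>2 + (norm z)\<^sup>2"
    using norm_add_Pythagorean[of y z] y z v by (simp add: orthogonal_commute)
  ultimately show ?thesis
    by (metis le_add_same_cancel1 power2_le_imp_le norm_ge_zero zero_le_power2)
qed

lemma norm_le_of_relative_error:
  fixes p E :: "'a::real_normed_vector"
  assumes "E \<noteq> 0" "norm (p - E) / norm E = r" "r < 1" "norm E \<le> b / (1 - r)"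
  shows "norm p \<le> (1 + r) / (1 - r) * b"
proof -
  have "0 \<le> r"
    using assms(2) by (metis divide_nonneg_nonneg norm_ge_zero)
  have "norm p \<le> norm E + norm (p - E)"
    by (rule norm_triangle_sub)
  also have "\<dots> = (1 + r) * norm E"
    using assms(1,2) by (auto simp: field_simps)
  also have "\<dots> \<le> (1 + r) * (b / (1 - r))"
    using assms(4) \<open>0 \<le> r\<close> by (intro mult_left_mono) auto
  finally show ?thesis by simp
qed

theorem proposition4p2:
  fixes f :: "(real^'n) \<Rightarrow> (real^'n)"
    and f1 :: "(real^'n) \<Rightarrow> ((real^'n) \<Rightarrow>\<^sub>L (real^'n))"
    and f2 :: "(real^'n) \<Rightarrow> ((real^'n) \<Rightarrow>\<^sub>L ((real^'n) \<Rightarrow>\<^sub>L (real^'n)))"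
    and f3 :: "(real^'n) \<Rightarrow> ((real^'n) \<Rightarrow>\<^sub>L ((real^'n) \<Rightarrow>\<^sub>L ((real^'n) \<Rightarrow>\<^sub>L (real^'n))))"
    and xs :: "(real^'n)" and rh :: real and x :: "nat \<Rightarrow> (real^'n)" and k :: nat
    and E :: "(real^'n)"
  assumes defs: "N = {v. blinfun_apply (f1 xs) v = 0}"
    and "R = range (blinfun_apply (f1 xs))"
    and "PN = oproj N"
    and "PR = oproj R"
    and "S = {y. det (matrix (blinfun_apply (f1 y))) = 0}"
    and "w = (\<lambda>j. - (matrix_inv (matrix (blinfun_apply (f1 (x (j - 1))))) *v f (x (j - 1))))"
    and "e = (\<lambda>j. x j - xs)"
    and "gamma = (\<lambda>j. inner (w j - w (j - 1)) (w j) / (norm (w j - w (j - 1)))^2)"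
    and "Dhat = (\<lambda>y v. PN (blinfun_apply (blinfun_apply (f2 xs) (y - xs)) v))"
    and "T = (\<lambda>j v. (1/2) *\<^sub>R inv_into N (Dhat (x j))
                   (PN (blinfun_apply (blinfun_apply (f2 (x j)) (e j)) v)))"
    and "walpha = (1 - gamma (k+1)) *\<^sub>R w (k+1) + gamma (k+1) *\<^sub>R w k"
    and "theta = norm walpha / norm (w (k+1))"
    and "q = e (k+1)
              - (1/2) *\<^sub>R ((1 - gamma (k+1)) *\<^sub>R PN (e k) + gamma (k+1) *\<^sub>R PN (e (k - 1)))
              - ((1 - gamma (k+1)) *\<^sub>R T k (PR (e k)) + gamma (k+1) *\<^sub>R T (k - 1) (PR (e (k - 1))))"
    and "a = (\<lambda>i::nat. if i = 1 then ((1 - gamma (k+1)) / 2) *\<^sub>R PN (e k)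
              else if i = 2 then (gamma (k+1) / 2) *\<^sub>R PN (e (k - 1))
              else if i = 3 then (1 - gamma (k+1)) *\<^sub>R T k (PR (e k))
              else if i = 4 then gamma (k+1) *\<^sub>R T (k - 1) (PR (e (k - 1)))
              else PN q)"
    and "Se = {sum a I | I. I \<subseteq> {1..5} \<and> I \<noteq> {} \<and> I \<noteq> {1..5}}"
    and "Rset = {norm (PN (e (k+1)) - E') / norm E' | E'. E' \<in> Se \<and> E' \<noteq> 0}"
    and "r = Min Rset"
    and C3: "\<forall>y. (f has_derivative blinfun_apply (f1 y)) (at y)"
      "\<forall>y. (f1 has_derivative blinfun_apply (f2 y)) (at y)"
      "\<forall>y. (f2 has_derivative blinfun_apply (f3 y)) (at y)"
      "continuous_on UNIV f3"
    and root: "f xs = 0"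
    and Nnz: "N \<noteq> {0}"
    and dsum: "N \<inter> R = {0}" "{u + v | u v. u \<in> N \<and> v \<in> R} = UNIV"
    and A_rh: "0 < rh"
    and A_inv: "\<forall>y \<in> ball xs rh - S. bij_betw (Dhat y) N N"
    and A_O1: "\<exists>C. \<forall>y \<in> ball xs rh - S. \<forall>v.
                 norm (matrix_inv (matrix (blinfun_apply (f1 y))) *v v - inv_into N (Dhat y) (PN v))
                   \<le> C * norm v"
    and NA1: "x 1 = x 0 + w 1"
    and NA: "\<forall>j. 1 \<le> j \<and> j \<le> k \<longrightarrow>
               x (j+1) = x j + w (j+1) - gamma (j+1) *\<^sub>R (x j - x (j - 1) + w (j+1) - w j)"
    and k1: "1 \<le> k"
    and xk: "x k \<in> ball xs rh - S" and xk1: "x (k - 1) \<in> ball xs rh - S"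
    and wnz: "w (k+1) \<noteq> 0"
    and Emin: "E \<in> Se" "E \<noteq> 0" "norm (PN (e (k+1)) - E) / norm E = r"
    and rlt: "r < 1"
    and Ebd: "norm E \<le> norm (PN walpha) / (1 - r)"
  shows "norm (PN (e (k+1))) \<le> ((1 + r) / (1 - r)) * theta * norm (w (k+1))"
proof -
  have "subspace N"
    unfolding defs(1)
    by (rule linear_subspace_kernel) (rule blinfun.bounded_linear_right[THEN bounded_linear.linear])
  then have "norm (PN walpha) \<le> norm walpha"
    using norm_oproj_le assms(3) by simp
  then have "norm E \<le> norm walpha / (1 - r)"
    using rlt by (intro order_trans[OF Ebd divide_right_mono]) auto
  with Emin(2,3) rlt have "norm (PN (e (k+1))) \<le> (1 + r) / (1 - r) * norm walpha"
    by (rule norm_le_of_relative_error)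
  also have "norm walpha = theta * norm (w (k+1))"
    using wnz assms(12) by simp
  finally show ?thesis
    by (simp add: mult.assoc)
qed

end
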